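(* The center of $SV\#_\alpha G$ equals the invariant subalgebra $(SV)^G$, and $(SV)^G$ is generated as an algebra by $x_1^\ell,\ldots,x_n^\ell$ and $x_1x_2\cdots x_n$.
   Context: Fix integers $n\ge 3$ and $\ell\ge 2$, and let $\zeta$ be a primitive $\ell$-th root of unity. Let $V=\mathbb{C}^n$ with standard basis $x_1,\ldots,x_n$, $SV=\mathbb{C}[x_1,\ldots,x_n]$ its symmetric algebra, and let $G$ be the group of all diagonal matrices $g\in SL_n(\mathbb{C})$ with $g^\ell=1$, acting on $SV$. For $i=1,\ldots,n$ (indices mod $n$) let $g_i\in G$ be given by $g_i(x_i)=\zeta x_i$, $g_i(x_{i+1})=\zeta^{-1}x_{i+1}$, $g_i(x_j)=x_j$ otherwise; $g_1,\ldots,g_{n-1}$ freely generate $G\cong(\mathbb{Z}/\ell\mathbb{Z})^{n-1}$. Define the 2-cocycle $\alpha$ by $\alpha(g_1^{i_1}\cdots g_{n-1}^{i_{n-1}},g_1^{j_1}\cdots g_{n-1}^{j_{n-1}})=\zeta^{-i_1j_2-\cdots-i_{n-2}j_{n-1}}$. $SV\#_\alpha G$ is $SV\otimes\mathbb{C}G$ with product $(r\otimes g)(s\otimes h)=\alpha(g,h)\,r\,(g\cdot s)\otimes gh$. *)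

theory Defs
  imports Complex_Main "HOL-Library.Poly_Mapping"
begin

text \<open>Polynomials in variables x_0, x_1, ... (0-indexed; x_j here is x_{j+1} of the paper),
  as finitely supported maps from monomials (exponent vectors) to complex coefficients,
  with the convolution ring structure of Poly_Mapping.\<close>
type_synonym cpoly = "(nat \<Rightarrow>\<^sub>0 nat) \<Rightarrow>\<^sub>0 complex"

definition SV :: "nat \<Rightarrow> cpoly set" where
  "SV n = {p. \<forall>m \<in> Poly_Mapping.keys p. Poly_Mapping.keys m \<subseteq> {..<n}}"

definition var_pow :: "nat \<Rightarrow> nat \<Rightarrow> cpoly" where
  "var_pow i e = Poly_Mapping.single (Poly_Mapping.single i e) 1"

definition all_vars_prod :: "nat \<Rightarrow> cpoly" where
  "all_vars_prod n = Poly_Mapping.single (\<Sum>i<n. Poly_Mapping.single i 1) 1"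

text \<open>Group G, written in the coordinates w.r.t. the free generators g_1..g_{n-1}:
  c represents g_1^{c 0} * ... * g_{n-1}^{c (n-2)}, with 0 <= c k < l.\<close>
definition Grp :: "nat \<Rightarrow> nat \<Rightarrow> (nat \<Rightarrow> nat) set" where
  "Grp n l = {c. (\<forall>k<n-1. c k < l) \<and> (\<forall>k\<ge>n-1. c k = 0)}"

definition gmul :: "nat \<Rightarrow> (nat \<Rightarrow> nat) \<Rightarrow> (nat \<Rightarrow> nat) \<Rightarrow> (nat \<Rightarrow> nat)" where
  "gmul l c d = (\<lambda>k. (c k + d k) mod l)"

definition gunit :: "nat \<Rightarrow> nat" where
  "gunit = (\<lambda>_. 0)"

text \<open>Diagonal entry of g at variable x_j: g_{k} multiplies x_k by zeta and x_{k+1} by zeta^-1.\<close>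
definition diag_entry :: "complex \<Rightarrow> (nat \<Rightarrow> nat) \<Rightarrow> nat \<Rightarrow> complex" where
  "diag_entry z c j = z powi (int (c j) - (if j = 0 then 0 else int (c (j - 1))))"

definition chi :: "nat \<Rightarrow> complex \<Rightarrow> (nat \<Rightarrow> nat) \<Rightarrow> (nat \<Rightarrow>\<^sub>0 nat) \<Rightarrow> complex" where
  "chi n z c m = (\<Prod>j<n. diag_entry z c j ^ Poly_Mapping.lookup m j)"

definition act :: "nat \<Rightarrow> complex \<Rightarrow> (nat \<Rightarrow> nat) \<Rightarrow> cpoly \<Rightarrow> cpoly" where
  "act n z c p = Poly_Mapping.mapp (\<lambda>m a. chi n z c m * a) p"

definition cocycle :: "nat \<Rightarrow> complex \<Rightarrow> (nat \<Rightarrow> nat) \<Rightarrow> (nat \<Rightarrow> nat) \<Rightarrow> complex" where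
  "cocycle n z c d = z powi (- (\<Sum>k<n-2. int (c k) * int (d (k + 1))))"

text \<open>SV #_alpha G: elements sum_g F(g) \<otimes> g, represented by F : G \<Rightarrow> SV.\<close>
definition Smash :: "nat \<Rightarrow> nat \<Rightarrow> ((nat \<Rightarrow> nat) \<Rightarrow> cpoly) set" where
  "Smash n l = {F. (\<forall>g. g \<notin> Grp n l \<longrightarrow> F g = 0) \<and> (\<forall>g\<in>Grp n l. F g \<in> SV n)}"

definition smash_mult :: "nat \<Rightarrow> nat \<Rightarrow> complex \<Rightarrow> ((nat \<Rightarrow> nat) \<Rightarrow> cpoly)
    \<Rightarrow> ((nat \<Rightarrow> nat) \<Rightarrow> cpoly) \<Rightarrow> ((nat \<Rightarrow> nat) \<Rightarrow> cpoly)" where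
  "smash_mult n l z F H = (\<lambda>k. \<Sum>g\<in>Grp n l. \<Sum>h\<in>Grp n l.
      if gmul l g h = k
      then Poly_Mapping.map (\<lambda>a. cocycle n z g h * a) (F g * act n z g (H h))
      else 0)"

definition smash_center :: "nat \<Rightarrow> nat \<Rightarrow> complex \<Rightarrow> ((nat \<Rightarrow> nat) \<Rightarrow> cpoly) set" where
  "smash_center n l z = {Zc \<in> Smash n l. \<forall>W \<in> Smash n l. smash_mult n l z Zc W = smash_mult n l z W Zc}"

definition embed_one :: "cpoly \<Rightarrow> ((nat \<Rightarrow> nat) \<Rightarrow> cpoly)" where
  "embed_one r = (\<lambda>g. if g = gunit then r else 0)"

definition invariants :: "nat \<Rightarrow> nat \<Rightarrow> complex \<Rightarrow> cpoly set" where
  "invariants n l z = {p \<in> SV n. \<forall>g\<in>Grp n l. act n z g p = p}"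

inductive_set gen_subalg :: "cpoly set \<Rightarrow> cpoly set" for S where
  gen: "p \<in> S \<Longrightarrow> p \<in> gen_subalg S"
| const: "Poly_Mapping.single 0 a \<in> gen_subalg S"
| add: "p \<in> gen_subalg S \<Longrightarrow> q \<in> gen_subalg S \<Longrightarrow> p + q \<in> gen_subalg S"
| mult: "p \<in> gen_subalg S \<Longrightarrow> q \<in> gen_subalg S \<Longrightarrow> p * q \<in> gen_subalg S"

end

theory Submission
  imports Defs
begin

text \<open>
  The group G acts diagonally on SV: a group element c multiplies the
  monomial x^m by the character value chi c m.  Hence both parts of the theorem reduce to
  statements about monomials.

  Multiplying an element F of SV #_alpha G by r \<otimes> 1 on either side gives the
  components r * F g and F g * g(r).  Testing a central element against r = x_j, where g
  acts on x_j by a nontrivial root of unity, kills every component off the unit; testing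
  against 1 \<otimes> h shows that the unit component is h-invariant.  Conversely r \<otimes> 1 with r
  invariant commutes with everything.

  A polynomial is invariant iff each of its monomials is.  Testing a monomial
  x^m against the generators g_k shows that all exponents m_i agree modulo l, so
  x^m = (x_1...x_n)^r * prod_i (x_i^l)^(b_i); conversely the generators are invariant and
  invariant monomials are closed under multiplication.
\<close>

lemma Grp_as_funs: "Grp n l = {c. \<forall>k. (k \<in> {..<n-1} \<longrightarrow> c k \<in> {..<l}) \<and> (k \<notin> {..<n-1} \<longrightarrow> c k = 0)}"
  by (auto simp: Grp_def)

lemma finite_Grp: "finite (Grp n l)"
  unfolding Grp_as_funs by (intro finite_set_of_finite_funs) auto

lemma gunit_Grp: "0 < l \<Longrightarrow> gunit \<in> Grp n l"
  by (simp add: Grp_def gunit_def)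

lemma gmul_gunit_left: "h \<in> Grp n l \<Longrightarrow> gmul l gunit h = h"
  by (auto simp: Grp_def gmul_def gunit_def fun_eq_iff) (metis mod_0 mod_less not_less)

lemma gmul_gunit_right: "h \<in> Grp n l \<Longrightarrow> gmul l h gunit = h"
  by (auto simp: Grp_def gmul_def gunit_def fun_eq_iff) (metis mod_0 mod_less not_less)

lemma cocycle_gunit_left [simp]: "cocycle n z gunit h = 1"
  by (simp add: cocycle_def gunit_def)

lemma cocycle_gunit_right [simp]: "cocycle n z h gunit = 1"
  by (simp add: cocycle_def gunit_def)

lemma lookup_act: "Poly_Mapping.lookup (act n z c p) m = chi n z c m * Poly_Mapping.lookup p m"
  by (simp add: act_def lookup_mapp when_def in_keys_iff)

lemma diag_entry_gunit [simp]: "diag_entry z gunit j = 1"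
  by (simp add: diag_entry_def gunit_def)

lemma chi_gunit [simp]: "chi n z gunit m = 1"
  by (simp add: chi_def)

lemma act_gunit [simp]: "act n z gunit p = p"
  by (rule poly_mapping_eqI) (simp add: lookup_act)

lemma act_zero [simp]: "act n z c 0 = 0"
  by (rule poly_mapping_eqI) (simp add: lookup_act)

lemma act_single: "act n z c (Poly_Mapping.single m a) = Poly_Mapping.single m (chi n z c m * a)"
  by (rule poly_mapping_eqI) (simp add: lookup_act lookup_single when_def)

lemma chi_zero [simp]: "chi n z c 0 = 1"
  by (simp add: chi_def)

lemma chi_add: "chi n z c (a + b) = chi n z c a * chi n z c b"
  by (simp add: chi_def lookup_add power_add prod.distrib)

lemma chi_single: "j < n \<Longrightarrow> chi n z c (Poly_Mapping.single j e) = diag_entry z c j ^ e"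
  unfolding chi_def lookup_single when_def by (simp add: if_distrib[of "\<lambda>k. _ ^ k"] prod.If_cases)

lemma embed_one_apply: "embed_one r g = (if g = gunit then r else 0)"
  by (simp add: embed_one_def)

lemma map_scale_one [simp]: "Poly_Mapping.map ((*) (1::complex)) p = p"
  by (rule poly_mapping_eqI) (simp add: map.rep_eq when_def)

lemma map_scale_zero [simp]: "Poly_Mapping.map ((*) (c::complex)) 0 = 0"
  by (rule poly_mapping_eqI) (simp add: map.rep_eq when_def)

lemma smash_mult_embed_one_left:
  assumes "0 < l"
  shows "smash_mult n l z (embed_one r) H k = (if k \<in> Grp n l then r * H k else 0)"
proof -
  let ?term = "\<lambda>g h. if gmul l g h = k
      then Poly_Mapping.map (\<lambda>a. cocycle n z g h * a) (embed_one r g * act n z g (H h)) else 0"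
  have "smash_mult n l z (embed_one r) H k = (\<Sum>g\<in>Grp n l. \<Sum>h\<in>Grp n l. ?term g h)"
    by (simp add: smash_mult_def)
  also have "\<dots> = (\<Sum>g\<in>Grp n l. if g = gunit then (\<Sum>h\<in>Grp n l. ?term gunit h) else 0)"
    by (intro sum.cong refl) (simp add: embed_one_apply cong: if_cong)
  also have "\<dots> = (\<Sum>h\<in>Grp n l. ?term gunit h)"
    using gunit_Grp[OF assms] finite_Grp by simp
  also have "\<dots> = (\<Sum>h\<in>Grp n l. if h = k then r * H k else 0)"
    by (rule sum.cong) (auto simp: gmul_gunit_left embed_one_apply)
  finally show ?thesis using finite_Grp by simp
qed

lemma smash_mult_embed_one_right:
  assumes "0 < l"
  shows "smash_mult n l z H (embed_one r) k = (if k \<in> Grp n l then H k * act n z k r else 0)"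
proof -
  let ?term = "\<lambda>g h. if gmul l g h = k
      then Poly_Mapping.map (\<lambda>a. cocycle n z g h * a) (H g * act n z g (embed_one r h)) else 0"
  have "smash_mult n l z H (embed_one r) k = (\<Sum>g\<in>Grp n l. \<Sum>h\<in>Grp n l. ?term g h)"
    by (simp add: smash_mult_def)
  also have "\<dots> = (\<Sum>g\<in>Grp n l. ?term g gunit)"
    using gunit_Grp[OF assms] finite_Grp
    by (intro sum.cong refl, subst sum.remove[of _ gunit]) (simp_all add: embed_one_apply cong: if_cong)
  also have "\<dots> = (\<Sum>g\<in>Grp n l. if g = k then H k * act n z k r else 0)"
    by (rule sum.cong) (auto simp: gmul_gunit_right embed_one_apply)
  finally show ?thesis using finite_Grp by simp
qed

subsection \<open>The centre of SV #_alpha G\<close>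

text \<open>Every element of G other than the unit scales some variable x_j by a nontrivial
  root of unity: take j to be the first coordinate where c is nonzero.\<close>

lemma nonunit_moves_variable:
  assumes prim: "\<forall>k. 0 < k \<and> k < l \<longrightarrow> z ^ k \<noteq> 1"
    and c: "c \<in> Grp n l" "c \<noteq> gunit"
  obtains j where "j < n" "diag_entry z c j \<noteq> 1"
proof -
  from c(2) obtain i where "c i \<noteq> 0" by (auto simp: gunit_def)
  define j where "j = (LEAST j. c j \<noteq> 0)"
  have cj: "c j \<noteq> 0" unfolding j_def by (rule LeastI) fact
  have below: "t < j \<Longrightarrow> c t = 0" for t unfolding j_def using not_less_Least by blast
  have j: "j < n - 1" "c j < l" using cj c(1) by (auto simp: Grp_def not_less[symmetric])
  have "diag_entry z c j = z ^ c j"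
    using below[of "j - 1"] by (cases j) (simp_all add: diag_entry_def)
  with prim cj j show ?thesis by (intro that[of j]) auto
qed

text \<open>Hence a central element has no components off the unit: its component at c must
  commute with x_j \<otimes> 1, which c moves.\<close>

lemma central_vanishes_off_unit:
  assumes l: "0 < l" and prim: "\<forall>k. 0 < k \<and> k < l \<longrightarrow> z ^ k \<noteq> 1"
    and Zc: "Zc \<in> smash_center n l z" and c: "c \<in> Grp n l" "c \<noteq> gunit"
  shows "Zc c = 0"
proof -
  obtain j where j: "j < n" and moved: "diag_entry z c j \<noteq> 1"
    using nonunit_moves_variable[OF prim c] .
  define x where "x = (Poly_Mapping.single (Poly_Mapping.single j 1) 1 :: cpoly)"
  define \<chi> where "\<chi> = diag_entry z c j"
  have "embed_one x \<in> Smash n l"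
    using j gunit_Grp[OF l] by (auto simp: Smash_def embed_one_def x_def SV_def)
  with Zc have "smash_mult n l z Zc (embed_one x) c = smash_mult n l z (embed_one x) Zc c"
    by (auto simp: smash_center_def)
  hence "Zc c * act n z c x = x * Zc c"
    using c(1) l by (simp add: smash_mult_embed_one_left smash_mult_embed_one_right)
  moreover have "act n z c x = Poly_Mapping.single 0 \<chi> * x"
    by (simp add: x_def act_single chi_single[OF j] \<chi>_def mult_single)
  ultimately have "Zc c * x * (Poly_Mapping.single 0 \<chi> - 1) = 0"
    by (simp add: algebra_simps)
  moreover have "x \<noteq> 0" by (metis x_def lookup_single_eq lookup_zero one_neq_zero)
  moreover have "Poly_Mapping.single 0 \<chi> - 1 \<noteq> (0::cpoly)"
  proof
    assume "Poly_Mapping.single 0 \<chi> - 1 = (0::cpoly)"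
    hence "Poly_Mapping.lookup (Poly_Mapping.single 0 \<chi> - 1 :: cpoly) 0 = 0" by simp
    with moved show False by (simp add: lookup_minus \<chi>_def)
  qed
  ultimately show ?thesis by simp
qed

text \<open>The unit component of a central element is invariant: commute it with 1 \<otimes> h.\<close>

lemma central_unit_component_invariant:
  assumes l: "0 < l" and Zc: "Zc \<in> smash_center n l z"
    and unit_only: "Zc = embed_one (Zc gunit)"
  shows "Zc gunit \<in> invariants n l z"
  unfolding invariants_def
proof (intro CollectI conjI ballI)
  show "Zc gunit \<in> SV n"
    using Zc gunit_Grp[OF l] by (simp add: smash_center_def Smash_def)
  fix h assume h: "h \<in> Grp n l"
  define W where "W = (\<lambda>g. if g = h then (1::cpoly) else 0)"
  have "W \<in> Smash n l" using h by (auto simp: Smash_def W_def SV_def)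
  with Zc have "smash_mult n l z Zc W h = smash_mult n l z W Zc h"
    by (auto simp: smash_center_def)
  thus "act n z h (Zc gunit) = Zc gunit"
    using h l by (subst (asm) (1 2) unit_only)
      (simp add: smash_mult_embed_one_left smash_mult_embed_one_right W_def)
qed

lemma invariant_central:
  assumes l: "0 < l" and r: "r \<in> invariants n l z"
  shows "embed_one r \<in> smash_center n l z"
proof -
  have "embed_one r \<in> Smash n l"
    using r gunit_Grp[OF l] by (auto simp: Smash_def embed_one_def invariants_def SV_def)
  moreover have "smash_mult n l z (embed_one r) W = smash_mult n l z W (embed_one r)" for W
    using r l by (auto simp: smash_mult_embed_one_left smash_mult_embed_one_right
        invariants_def mult.commute)
  ultimately show ?thesis by (simp add: smash_center_def)
qed

theorem center_eq_invariants:
  assumes l: "0 < l" and prim: "\<forall>k. 0 < k \<and> k < l \<longrightarrow> z ^ k \<noteq> 1"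
  shows "smash_center n l z = embed_one ` invariants n l z"
proof
  show "smash_center n l z \<subseteq> embed_one ` invariants n l z"
  proof
    fix Zc assume Zc: "Zc \<in> smash_center n l z"
    have unit_only: "Zc = embed_one (Zc gunit)"
    proof
      fix c show "Zc c = embed_one (Zc gunit) c"
        using Zc central_vanishes_off_unit[OF l prim Zc, of c]
        by (cases "c \<in> Grp n l") (auto simp: embed_one_apply smash_center_def Smash_def)
    qed
    with central_unit_component_invariant[OF l Zc unit_only]
    show "Zc \<in> embed_one ` invariants n l z" by blast
  qed
  show "embed_one ` invariants n l z \<subseteq> smash_center n l z"
    using invariant_central[OF l] by blast
qed

subsection \<open>Invariant polynomials are spanned by invariant monomials\<close>

definition fixed_monomial :: "nat \<Rightarrow> nat \<Rightarrow> complex \<Rightarrow> (nat \<Rightarrow>\<^sub>0 nat) \<Rightarrow> bool" where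
  "fixed_monomial n l z m \<longleftrightarrow> (\<forall>c\<in>Grp n l. chi n z c m = 1)"

lemma invariants_iff_fixed_monomials:
  "p \<in> invariants n l z \<longleftrightarrow> p \<in> SV n \<and> (\<forall>m\<in>Poly_Mapping.keys p. fixed_monomial n l z m)"
proof -
  have "act n z c p = p \<longleftrightarrow> (\<forall>m\<in>Poly_Mapping.keys p. chi n z c m = 1)" for c
    by (auto simp: poly_mapping_eq_iff fun_eq_iff lookup_act in_keys_iff)
  thus ?thesis by (auto simp: invariants_def fixed_monomial_def)
qed

lemma fixed_monomial_add:
  "fixed_monomial n l z a \<Longrightarrow> fixed_monomial n l z b \<Longrightarrow> fixed_monomial n l z (a + b)"
  by (simp add: fixed_monomial_def chi_add)

lemma invariants_const: "Poly_Mapping.single 0 a \<in> invariants n l z"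
  by (auto simp: invariants_iff_fixed_monomials SV_def fixed_monomial_def)

lemma invariants_add:
  "p \<in> invariants n l z \<Longrightarrow> q \<in> invariants n l z \<Longrightarrow> p + q \<in> invariants n l z"
  unfolding invariants_iff_fixed_monomials SV_def mem_Collect_eq using keys_add[of p q] by blast

lemma invariants_mult:
  assumes "p \<in> invariants n l z" "q \<in> invariants n l z"
  shows "p * q \<in> invariants n l z"
  unfolding invariants_iff_fixed_monomials SV_def
proof (intro CollectI conjI ballI)
  fix m assume "m \<in> Poly_Mapping.keys (p * q)"
  then obtain a b where m: "m = a + b" "a \<in> Poly_Mapping.keys p" "b \<in> Poly_Mapping.keys q"
    using keys_mult[of p q] by blast
  with assms show "fixed_monomial n l z m"
    by (simp add: invariants_iff_fixed_monomials fixed_monomial_add)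
  have "Poly_Mapping.keys m \<subseteq> Poly_Mapping.keys a \<union> Poly_Mapping.keys b"
    using m(1) keys_add by simp
  moreover have "Poly_Mapping.keys a \<subseteq> {..<n}" "Poly_Mapping.keys b \<subseteq> {..<n}"
    using m(2,3) assms by (auto simp: invariants_iff_fixed_monomials SV_def)
  ultimately show "Poly_Mapping.keys m \<subseteq> {..<n}" by blast
qed

abbreviation generators :: "nat \<Rightarrow> nat \<Rightarrow> cpoly set" where
  "generators n l \<equiv> {var_pow i l | i. i < n} \<union> {all_vars_prod n}"

lemma nonzero_if_root_of_unity: "(z::complex) ^ l = 1 \<Longrightarrow> 0 < l \<Longrightarrow> z \<noteq> 0"
  by (metis zero_power zero_neq_one)

text \<open>Every diagonal entry is an l-th root of unity, so x_j^l is invariant.\<close>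

lemma fixed_monomial_var_pow:
  assumes zl: "z ^ l = 1" and j: "j < n"
  shows "fixed_monomial n l z (Poly_Mapping.single j l)"
  unfolding fixed_monomial_def
proof
  fix c
  have "diag_entry z c j ^ l = (z ^ l) powi (int (c j) - (if j = 0 then 0 else int (c (j - 1))))"
    by (simp add: diag_entry_def power_int_power' power_int_mult mult.commute)
  thus "chi n z c (Poly_Mapping.single j l) = 1" by (simp add: chi_single[OF j] zl)
qed

text \<open>The diagonal entries of c telescope: their product over the first N+1 variables
  is z^(c N).  Since c (n-1) = 0, the product x_1...x_n is invariant.\<close>

lemma diag_entry_prod:
  assumes "z \<noteq> 0"
  shows "(\<Prod>j<Suc N. diag_entry z c j) = z ^ c N"
proof (induction N)
  case 0 show ?case by (simp add: diag_entry_def)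
next
  case (Suc N)
  have "z ^ c (Suc N) = z powi (int (c N) + (int (c (Suc N)) - int (c N)))"
    by simp
  also have "\<dots> = z powi int (c N) * z powi (int (c (Suc N)) - int (c N))"
    using assms by (rule power_int_add[OF disjI1])
  also have "\<dots> = (\<Prod>j<Suc (Suc N). diag_entry z c j)"
    using Suc by (simp add: diag_entry_def)
  finally show ?case by (rule sym)
qed

lemma fixed_monomial_all_vars:
  assumes z0: "z \<noteq> 0"
  shows "fixed_monomial n l z (\<Sum>i<n. Poly_Mapping.single i 1)"
  unfolding fixed_monomial_def
proof
  fix c assume c: "c \<in> Grp n l"
  have "chi n z c (\<Sum>i<n. Poly_Mapping.single i 1) = (\<Prod>j<n. diag_entry z c j)"
    unfolding chi_def by (rule prod.cong) (simp_all add: lookup_sum lookup_single when_def)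
  also have "\<dots> = 1"
  proof (cases n)
    case (Suc N)
    with c have "c N = 0" by (simp add: Grp_def)
    with Suc show ?thesis by (simp only: diag_entry_prod[OF z0]) simp
  qed simp
  finally show "chi n z c (\<Sum>i<n. Poly_Mapping.single i 1) = 1" .
qed

lemma gen_subalg_subset_invariants:
  assumes zl: "z ^ l = 1" and l: "0 < l"
  shows "gen_subalg (generators n l) \<subseteq> invariants n l z"
proof
  fix p assume "p \<in> gen_subalg (generators n l)"
  thus "p \<in> invariants n l z"
  proof (induction p rule: gen_subalg.induct)
    case (gen p)
    have keys_all_vars: "Poly_Mapping.keys (\<Sum>i<n. Poly_Mapping.single i (1::nat)) \<subseteq> {..<n}"
      by (auto simp: in_keys_iff lookup_sum lookup_single when_def split: if_splits)
    from gen show ?case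
      using fixed_monomial_var_pow[OF zl] fixed_monomial_all_vars[OF nonzero_if_root_of_unity[OF zl l]]
        keys_all_vars
      by (auto simp: invariants_iff_fixed_monomials var_pow_def all_vars_prod_def SV_def
          split: if_splits)
  qed (simp_all add: invariants_const invariants_add invariants_mult)
qed

subsection \<open>Invariant monomials are products of the generators\<close>

lemma root_of_unity_power_eq:
  assumes zl: "(z::complex) ^ l = 1" and prim: "\<forall>k. 0 < k \<and> k < l \<longrightarrow> z ^ k \<noteq> 1"
    and l: "0 < l" and eq: "z ^ a = z ^ b"
  shows "a mod l = b mod l"
proof -
  have z0: "z \<noteq> 0" using nonzero_if_root_of_unity[OF zl l] .
  have reduce: "z ^ x = z ^ (x mod l)" for x
  proof -
    have "z ^ x = z ^ (l * (x div l) + x mod l)" by simp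
    also have "\<dots> = (z ^ l) ^ (x div l) * z ^ (x mod l)" by (simp only: power_add power_mult)
    finally show ?thesis by (simp add: zl)
  qed
  have same: "x = y" if "y \<le> x" "x < l" "z ^ x = z ^ y" for x y
  proof (rule ccontr)
    assume "x \<noteq> y"
    with that prim have "z ^ (x - y) \<noteq> 1" by auto
    moreover have "z ^ (x - y) * z ^ y = z ^ y" using that by (simp add: power_add[symmetric])
    ultimately show False using z0 by simp
  qed
  have eq_mod: "z ^ (a mod l) = z ^ (b mod l)"
    unfolding reduce[of a, symmetric] reduce[of b, symmetric] by (rule eq)
  show ?thesis
  proof (cases "b mod l \<le> a mod l")
    case True
    show ?thesis by (rule same[OF True mod_less_divisor[OF l] eq_mod])
  next
    case False
    show ?thesis by (rule sym, rule same) (use False eq_mod l in auto)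
  qed
qed

text \<open>Testing a fixed monomial x^m against the generator g_(k+1), which scales x_k by z and
  x_(k+1) by z^-1, shows that neighbouring exponents give the same power of z.\<close>

lemma fixed_monomial_neighbours:
  assumes z0: "z \<noteq> 0" and l: "2 \<le> l" and k: "Suc k < n" and fixed: "fixed_monomial n l z m"
  shows "z ^ Poly_Mapping.lookup m k = z ^ Poly_Mapping.lookup m (Suc k)"
proof -
  define g where "g = (\<lambda>t. if t = k then 1 else (0::nat))"
  have "g \<in> Grp n l" using k l by (auto simp: Grp_def g_def)
  have diag: "diag_entry z g j = (if j = k then z else 1) * (if j = Suc k then inverse z else 1)" for j
    by (cases j) (auto simp: diag_entry_def g_def power_int_minus)
  have "chi n z g m = (\<Prod>j<n. (if j = k then z ^ Poly_Mapping.lookup m j else 1) *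
        (if j = Suc k then inverse z ^ Poly_Mapping.lookup m j else 1))"
    unfolding chi_def by (rule prod.cong) (auto simp: diag power_mult_distrib)
  also have "\<dots> = z ^ Poly_Mapping.lookup m k * inverse z ^ Poly_Mapping.lookup m (Suc k)"
    using k by (simp add: prod.distrib)
  finally have "z ^ Poly_Mapping.lookup m k * inverse z ^ Poly_Mapping.lookup m (Suc k) = 1"
    using fixed \<open>g \<in> Grp n l\<close> by (simp add: fixed_monomial_def)
  thus ?thesis using z0 by (simp add: power_inverse field_simps)
qed

lemma fixed_monomial_exponents_congruent:
  assumes zl: "z ^ l = 1" and prim: "\<forall>k. 0 < k \<and> k < l \<longrightarrow> z ^ k \<noteq> 1"
    and l: "2 \<le> l" and fixed: "fixed_monomial n l z m"
  shows "i < n \<Longrightarrow> Poly_Mapping.lookup m i mod l = Poly_Mapping.lookup m 0 mod l"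
proof (induction i)
  case (Suc i)
  have l0: "0 < l" using l by simp
  have "z ^ Poly_Mapping.lookup m i = z ^ Poly_Mapping.lookup m (Suc i)"
    using nonzero_if_root_of_unity[OF zl l0] l Suc.prems fixed by (rule fixed_monomial_neighbours)
  hence "Poly_Mapping.lookup m i mod l = Poly_Mapping.lookup m (Suc i) mod l"
    by (rule root_of_unity_power_eq[OF zl prim l0])
  with Suc show ?case by simp
qed simp

lemma gen_subalg_monomial_add:
  assumes "Poly_Mapping.single a (1::complex) \<in> gen_subalg S" "Poly_Mapping.single b 1 \<in> gen_subalg S"
  shows "Poly_Mapping.single (a + b) (1::complex) \<in> gen_subalg S"
  using gen_subalg.mult[OF assms] by (simp add: mult_single)

lemma gen_subalg_monomial_sum:
  "finite I \<Longrightarrow> (\<And>i. i \<in> I \<Longrightarrow> Poly_Mapping.single (f i) (1::complex) \<in> gen_subalg S)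
    \<Longrightarrow> Poly_Mapping.single (sum f I) (1::complex) \<in> gen_subalg S"
  by (induction I rule: finite_induct)
    (auto intro: gen_subalg_monomial_add gen_subalg.const[of 1, simplified])

lemma gen_subalg_sum:
  "finite A \<Longrightarrow> (\<And>x. x \<in> A \<Longrightarrow> f x \<in> gen_subalg S) \<Longrightarrow> sum f A \<in> gen_subalg S"
  by (induction A rule: finite_induct)
    (auto intro: gen_subalg.add gen_subalg.const[of 0, simplified])

lemma sum_of_terms: "(p::cpoly) = (\<Sum>m\<in>Poly_Mapping.keys p. Poly_Mapping.single m (Poly_Mapping.lookup p m))"
  by (rule poly_mapping_eqI)
    (simp add: lookup_sum lookup_single when_def in_keys_iff sum.delta' split: if_splits)

lemma var_pow_power_in_gen_subalg:
  assumes "i < n"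
  shows "Poly_Mapping.single (Poly_Mapping.single i (l * k)) (1::complex)
    \<in> gen_subalg (generators n l)"
proof (induction k)
  case 0 show ?case using gen_subalg.const[of 1] by simp
next
  case (Suc k)
  have "Poly_Mapping.single (Poly_Mapping.single i l) (1::complex)
      \<in> gen_subalg (generators n l)"
    using assms by (intro gen_subalg.gen) (auto simp: var_pow_def)
  from gen_subalg_monomial_add[OF this Suc] show ?case by (simp add: single_add[symmetric])
qed

lemma all_vars_power_in_gen_subalg:
  "Poly_Mapping.single (\<Sum>i<n. Poly_Mapping.single i k) (1::complex)
    \<in> gen_subalg (generators n l)"
proof (induction k)
  case 0 show ?case using gen_subalg.const[of 1] by simp
next
  case (Suc k)
  have "Poly_Mapping.single (\<Sum>i<n. Poly_Mapping.single i 1) (1::complex)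
      \<in> gen_subalg (generators n l)"
    by (intro gen_subalg.gen) (simp add: all_vars_prod_def)
  from gen_subalg_monomial_add[OF this Suc] show ?case
    by (simp add: single_add[symmetric] sum.distrib[symmetric])
qed

text \<open>If all exponents of x^m are r + l*b_i, then
  x^m = (x_1...x_n)^r * prod_i (x_i^l)^(b_i).\<close>

lemma fixed_monomial_in_gen_subalg:
  assumes zl: "z ^ l = 1" and prim: "\<forall>k. 0 < k \<and> k < l \<longrightarrow> z ^ k \<noteq> 1" and l: "2 \<le> l"
    and keys: "Poly_Mapping.keys m \<subseteq> {..<n}" and fixed: "fixed_monomial n l z m"
  shows "Poly_Mapping.single m (1::complex) \<in> gen_subalg (generators n l)"
proof -
  define r where "r = Poly_Mapping.lookup m 0 mod l"
  define b where "b = (\<lambda>i. Poly_Mapping.lookup m i div l)"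
  have exponent: "Poly_Mapping.lookup m i = r + l * b i" if "i < n" for i
    using fixed_monomial_exponents_congruent[OF zl prim l fixed that]
      div_mult_mod_eq[of "Poly_Mapping.lookup m i" l]
    by (simp add: r_def b_def mult.commute)
  have outside: "Poly_Mapping.lookup m i = 0" if "\<not> i < n" for i
    using keys that by (auto simp: in_keys_iff)
  have decomposition: "m = (\<Sum>i<n. Poly_Mapping.single i r) + (\<Sum>i<n. Poly_Mapping.single i (l * b i))"
  proof (rule poly_mapping_eqI)
    fix j show "Poly_Mapping.lookup m j = Poly_Mapping.lookup
        ((\<Sum>i<n. Poly_Mapping.single i r) + (\<Sum>i<n. Poly_Mapping.single i (l * b i))) j"
      by (cases "j < n") (simp_all add: lookup_add lookup_sum lookup_single when_def exponent outside)
  qed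
  have "Poly_Mapping.single (\<Sum>i<n. Poly_Mapping.single i (l * b i)) (1::complex)
      \<in> gen_subalg (generators n l)"
    by (rule gen_subalg_monomial_sum) (simp_all only: finite_lessThan lessThan_iff var_pow_power_in_gen_subalg)
  with all_vars_power_in_gen_subalg[where n = n and k = r and l = l] show ?thesis
    by (subst decomposition) (rule gen_subalg_monomial_add)
qed

lemma invariants_subset_gen_subalg:
  assumes zl: "z ^ l = 1" and prim: "\<forall>k. 0 < k \<and> k < l \<longrightarrow> z ^ k \<noteq> 1" and l: "2 \<le> l"
  shows "invariants n l z \<subseteq> gen_subalg (generators n l)"
proof
  fix p assume p: "p \<in> invariants n l z"
  have term_in: "Poly_Mapping.single m (Poly_Mapping.lookup p m) \<in> gen_subalg (generators n l)"
    if m: "m \<in> Poly_Mapping.keys p" for m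
  proof -
    have "Poly_Mapping.single m (Poly_Mapping.lookup p m)
        = Poly_Mapping.single 0 (Poly_Mapping.lookup p m) * Poly_Mapping.single m (1::complex)"
      by (simp add: mult_single)
    moreover have "Poly_Mapping.single m (1::complex) \<in> gen_subalg (generators n l)"
      using p m by (intro fixed_monomial_in_gen_subalg[OF zl prim l])
        (auto simp: invariants_iff_fixed_monomials SV_def)
    ultimately show ?thesis by (simp add: gen_subalg.mult gen_subalg.const)
  qed
  have "(\<Sum>m\<in>Poly_Mapping.keys p. Poly_Mapping.single m (Poly_Mapping.lookup p m))
      \<in> gen_subalg (generators n l)"
    by (rule gen_subalg_sum) (simp_all only: finite_keys term_in)
  thus "p \<in> gen_subalg (generators n l)"
    by (simp only: sum_of_terms[of p, symmetric])
qed

theorem mainTheorem5: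
  fixes n l :: nat and z :: complex
  assumes "n \<ge> 3" and "l \<ge> 2"
    and "z ^ l = 1" and "\<forall>k. 0 < k \<and> k < l \<longrightarrow> z ^ k \<noteq> 1"
  shows "smash_center n l z = embed_one ` invariants n l z
    \<and> invariants n l z = gen_subalg ({var_pow i l | i. i < n} \<union> {all_vars_prod n})"
proof
  have l: "0 < l" using assms(2) by simp
  show "smash_center n l z = embed_one ` invariants n l z"
    using center_eq_invariants[OF l assms(4)] .
  show "invariants n l z = gen_subalg (generators n l)"
    using invariants_subset_gen_subalg[OF assms(3,4,2)] gen_subalg_subset_invariants[OF assms(3) l]
    by (rule subset_antisym)
qed

end
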